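(* For integers $n,r$ with $3\le r\le n-3$, there is no graph $H$ with $\mathsf{TS}_2(H)\cong J(n,r)$; that is, $2\notin\mathcal{K}^{\mathsf{TS}}(J(n,r))$.
   Context: All graphs are finite, simple, undirected. A $k$-clique of a graph $H$ is a set of $k$ pairwise adjacent vertices. For a graph $H$ and integer $k\ge1$, the Token Sliding graph $\mathsf{TS}_k(H)$ has as vertices the $k$-cliques of $H$, and two $k$-cliques $A,B$ are adjacent iff $A\setminus B=\{u\}$, $B\setminus A=\{v\}$ for some vertices $u,v$ with $uv\in E(H)$. $\mathcal{K}^{\mathsf{TS}}(G)=\{k\ge1:\ \exists H,\ \mathsf{TS}_k(H)\cong G\}$. The Johnson graph $J(n,r)$ has as vertices the $r$-subsets of $\{1,\dots,n\}$, two being adjacent iff their intersection has size $r-1$. *)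

theory Defs
  imports Main
begin

definition simple_graph :: "'a set \<Rightarrow> ('a \<Rightarrow> 'a \<Rightarrow> bool) \<Rightarrow> bool" where
  "simple_graph V E \<longleftrightarrow> finite V \<and> (\<forall>u v. E u v \<longrightarrow> u \<in> V \<and> v \<in> V)
     \<and> (\<forall>u v. E u v \<longrightarrow> E v u) \<and> (\<forall>u. \<not> E u u)"

definition cliques :: "'a set \<Rightarrow> ('a \<Rightarrow> 'a \<Rightarrow> bool) \<Rightarrow> nat \<Rightarrow> 'a set set" where
  "cliques V E k = {C. C \<subseteq> V \<and> card C = k \<and> (\<forall>u\<in>C. \<forall>v\<in>C. u \<noteq> v \<longrightarrow> E u v)}"

definition TS_vert :: "'a set \<Rightarrow> ('a \<Rightarrow> 'a \<Rightarrow> bool) \<Rightarrow> nat \<Rightarrow> 'a set set" where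
  "TS_vert V E k = cliques V E k"

definition TS_adj :: "'a set \<Rightarrow> ('a \<Rightarrow> 'a \<Rightarrow> bool) \<Rightarrow> nat \<Rightarrow> 'a set \<Rightarrow> 'a set \<Rightarrow> bool" where
  "TS_adj V E k A B \<longleftrightarrow> A \<in> cliques V E k \<and> B \<in> cliques V E k \<and>
     (\<exists>u v. A - B = {u} \<and> B - A = {v} \<and> E u v)"

definition johnson_vert :: "nat \<Rightarrow> nat \<Rightarrow> nat set set" where
  "johnson_vert n r = {A. A \<subseteq> {1..n} \<and> card A = r}"

definition johnson_adj :: "nat \<Rightarrow> nat \<Rightarrow> nat set \<Rightarrow> nat set \<Rightarrow> bool" where
  "johnson_adj n r A B \<longleftrightarrow> A \<in> johnson_vert n r \<and> B \<in> johnson_vert n r \<and>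
     card (A \<inter> B) = r - 1"

definition graph_iso :: "'a set \<Rightarrow> ('a \<Rightarrow> 'a \<Rightarrow> bool) \<Rightarrow> 'b set \<Rightarrow> ('b \<Rightarrow> 'b \<Rightarrow> bool) \<Rightarrow> bool" where
  "graph_iso V1 E1 V2 E2 \<longleftrightarrow> (\<exists>f. bij_betw f V1 V2 \<and>
     (\<forall>x\<in>V1. \<forall>y\<in>V1. E1 x y \<longleftrightarrow> E2 (f x) (f y)))"

end

theory Submission imports Defs begin

text \<open>In J(n,r) any three pairwise adjacent vertices have a common neighbour: they either all
  contain a common (r-1)-set S, and then S plus a fresh element works (here n \<ge> r + 3 is used),
  or they all lie in a common (r+1)-set U, and then U minus an element of their common
  intersection works (here r \<ge> 3 is used).  In TS_2(H) an edge {u,v}{v,w} lies in the triangle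
  {u,v}, {v,w}, {u,w}, and no set Z meets each of these three pairs in exactly one element,
  since the three intersection sizes add up to 2 card (Z \<inter> {u,v,w}), an even number.\<close>

definition triangles_extend :: "'a set \<Rightarrow> ('a \<Rightarrow> 'a \<Rightarrow> bool) \<Rightarrow> bool" where
  "triangles_extend V E \<longleftrightarrow> (\<forall>x\<in>V. \<forall>y\<in>V. \<forall>z\<in>V. E x y \<and> E x z \<and> E y z \<longrightarrow>
     (\<exists>w\<in>V. E x w \<and> E y w \<and> E z w))"

lemma graph_iso_reflects_triangles_extend:
  assumes "graph_iso V1 E1 V2 E2" and "triangles_extend V2 E2"
  shows "triangles_extend V1 E1"
proof -
  obtain f where bij: "bij_betw f V1 V2"
    and iso: "\<And>x y. x \<in> V1 \<Longrightarrow> y \<in> V1 \<Longrightarrow> E1 x y \<longleftrightarrow> E2 (f x) (f y)"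
    using assms(1) unfolding graph_iso_def by blast
  show ?thesis
    unfolding triangles_extend_def
  proof (intro ballI impI)
    fix x y z assume xyz: "x \<in> V1" "y \<in> V1" "z \<in> V1" and "E1 x y \<and> E1 x z \<and> E1 y z"
    then have "E2 (f x) (f y) \<and> E2 (f x) (f z) \<and> E2 (f y) (f z)" using iso by blast
    moreover have "f x \<in> V2" "f y \<in> V2" "f z \<in> V2" using xyz bij bij_betwE by blast+
    ultimately obtain w' where "w' \<in> V2" and w': "E2 (f x) w'" "E2 (f y) w'" "E2 (f z) w'"
      using assms(2) unfolding triangles_extend_def by blast
    then obtain w where "w \<in> V1" "f w = w'" using bij by (metis bij_betw_imp_surj_on imageE)
    then show "\<exists>w\<in>V1. E1 x w \<and> E1 y w \<and> E1 z w" using w' xyz iso by blast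
  qed
qed

lemma graph_iso_reflects_edge:
  assumes "graph_iso V1 E1 V2 E2" and "x \<in> V2" "y \<in> V2" "E2 x y"
  shows "\<exists>a\<in>V1. \<exists>b\<in>V1. E1 a b"
proof -
  obtain f where bij: "bij_betw f V1 V2"
    and iso: "\<And>x y. x \<in> V1 \<Longrightarrow> y \<in> V1 \<Longrightarrow> E1 x y \<longleftrightarrow> E2 (f x) (f y)"
    using assms(1) unfolding graph_iso_def by blast
  obtain a b where "a \<in> V1" "b \<in> V1" "f a = x" "f b = y"
    using assms(2,3) bij by (metis bij_betw_imp_surj_on imageE)
  then show ?thesis using assms(4) iso by blast
qed

lemma johnson_adj_interval_shift:
  assumes "r + 1 \<le> n"
  shows "johnson_adj n r {1..r} {2..r+1}"
proof -
  have "{1..r} \<inter> {2..r+1} = {2..r}" by auto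
  then show ?thesis using assms unfolding johnson_adj_def johnson_vert_def by auto
qed

lemma johnson_adjI:
  assumes "A \<in> johnson_vert n r" "Y \<in> johnson_vert n r" "card (A \<inter> Y) = r - 1"
  shows "johnson_adj n r A Y"
  using assms unfolding johnson_adj_def by blast

lemma johnson_triangle_in_union_common_neighbour:
  assumes "3 \<le> r"
    and AB: "johnson_adj n r A B" and AX: "johnson_adj n r A X" and BX: "johnson_adj n r B X"
    and X_sub: "X \<subseteq> A \<union> B"
  shows "\<exists>Y. johnson_adj n r A Y \<and> johnson_adj n r B Y \<and> johnson_adj n r X Y"
proof -
  have A: "A \<in> johnson_vert n r" and B: "B \<in> johnson_vert n r" and X: "X \<in> johnson_vert n r"
    using AB AX unfolding johnson_adj_def by auto
  then have fin: "finite A" "finite B" "finite X" and card: "card A = r" "card B = r" "card X = r"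
    unfolding johnson_vert_def using finite_subset by auto
  have card_AB: "card (A \<inter> B) = r - 1" using AB unfolding johnson_adj_def by blast
  have card_U: "card (A \<union> B) = r + 1"
    using card_Un_Int[OF fin(1,2)] card card_AB \<open>3 \<le> r\<close> by simp
  have "card ((A \<inter> B) \<union> X) \<le> card (A \<union> B)"
    using X_sub fin by (intro card_mono) auto
  moreover have "card ((A \<inter> B) \<union> X) + card (A \<inter> B \<inter> X) = card (A \<inter> B) + card X"
    using card_Un_Int[of "A \<inter> B" X] fin by simp
  ultimately have "card (A \<inter> B \<inter> X) \<noteq> 0" using card_U card_AB card \<open>3 \<le> r\<close> by linarith
  then obtain t where t: "t \<in> A" "t \<in> B" "t \<in> X" by (metis card.empty IntE ex_in_conv)
  define Y where "Y = (A \<union> B) - {t}"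
  have "Y \<subseteq> {1..n}" using A B unfolding Y_def johnson_vert_def by blast
  moreover have "card Y = r" using card_U t fin unfolding Y_def by simp
  ultimately have Y: "Y \<in> johnson_vert n r" unfolding johnson_vert_def by blast
  have "A \<inter> Y = A - {t}" "B \<inter> Y = B - {t}" "X \<inter> Y = X - {t}"
    using X_sub unfolding Y_def by auto
  then have "card (A \<inter> Y) = r - 1" "card (B \<inter> Y) = r - 1" "card (X \<inter> Y) = r - 1"
    using t fin card by simp_all
  then show ?thesis using A B X Y by (blast intro: johnson_adjI)
qed

lemma johnson_triangle_outside_union_common_neighbour:
  assumes "r + 3 \<le> n"
    and AB: "johnson_adj n r A B" and AX: "johnson_adj n r A X" and BX: "johnson_adj n r B X"
    and c: "c \<in> X" "c \<notin> A \<union> B"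
  shows "\<exists>Y. johnson_adj n r A Y \<and> johnson_adj n r B Y \<and> johnson_adj n r X Y"
proof -
  have A: "A \<in> johnson_vert n r" and B: "B \<in> johnson_vert n r" and X: "X \<in> johnson_vert n r"
    using AB AX unfolding johnson_adj_def by auto
  then have fin: "finite A" "finite B" "finite X" and card: "card A = r" "card B = r" "card X = r"
    unfolding johnson_vert_def using finite_subset by auto
  have r_pos: "0 < r" using c fin(3) card(3) by (auto simp: card_gt_0_iff)
  have card_S: "card (X - {c}) = r - 1" using c fin card by simp
  have "X \<inter> A = X - {c}"
    using c card_S AX fin by (intro card_subset_eq) (auto simp: johnson_adj_def Int_commute)
  moreover have "X \<inter> B = X - {c}"
    using c card_S BX fin by (intro card_subset_eq) (auto simp: johnson_adj_def Int_commute)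
  ultimately have S: "A \<inter> B = X - {c}"
    using card_S AB fin by (intro card_subset_eq[symmetric]) (auto simp: johnson_adj_def)
  have "card (A \<union> B \<union> X) \<le> card (insert c (A \<union> B))"
    using S fin by (intro card_mono) auto
  also have "\<dots> = r + 2"
  proof -
    have "card (A \<union> B) = r + 1" using card_Un_Int[OF fin(1,2)] S card_S card r_pos by simp
    then show ?thesis using c fin by simp
  qed
  also have "\<dots> < card {1..n}" using assms(1) by simp
  finally have "\<not> {1..n} \<subseteq> A \<union> B \<union> X" using fin by (meson card_mono finite_UnI not_le)
  then obtain d where d: "d \<in> {1..n}" "d \<notin> A \<union> B \<union> X" by blast
  define Y where "Y = insert d (A \<inter> B)"
  have "Y \<subseteq> {1..n}" using A d unfolding Y_def johnson_vert_def by blast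
  moreover have "card Y = r" using d S card_S r_pos c fin unfolding Y_def by simp
  ultimately have Y: "Y \<in> johnson_vert n r" unfolding johnson_vert_def by blast
  have "A \<inter> Y = X - {c}" "B \<inter> Y = X - {c}" "X \<inter> Y = X - {c}"
    using d S unfolding Y_def by auto
  then show ?thesis using A B X Y card_S by (auto intro!: johnson_adjI)
qed

lemma johnson_triangles_extend:
  assumes "3 \<le> r" and "r + 3 \<le> n"
  shows "triangles_extend (johnson_vert n r) (johnson_adj n r)"
  unfolding triangles_extend_def
proof (intro ballI impI)
  fix A B X assume "johnson_adj n r A B \<and> johnson_adj n r A X \<and> johnson_adj n r B X"
  then have AB: "johnson_adj n r A B" and AX: "johnson_adj n r A X" and BX: "johnson_adj n r B X"
    by blast+
  consider "X \<subseteq> A \<union> B" | c where "c \<in> X" "c \<notin> A \<union> B" by blast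
  then obtain Y where "johnson_adj n r A Y" "johnson_adj n r B Y" "johnson_adj n r X Y"
  proof cases
    case 1
    then show ?thesis using johnson_triangle_in_union_common_neighbour[OF assms(1) AB AX BX] that
      by blast
  next
    case 2
    then show ?thesis using johnson_triangle_outside_union_common_neighbour[OF assms(2) AB AX BX] that
      by blast
  qed
  then show "\<exists>Y\<in>johnson_vert n r. johnson_adj n r A Y \<and> johnson_adj n r B Y \<and> johnson_adj n r X Y"
    unfolding johnson_adj_def by blast
qed

lemma TS_adj_card_Int:
  assumes "TS_adj V E k A B" and "0 < k"
  shows "card (A \<inter> B) = k - 1"
proof -
  obtain x where "A - B = {x}" using assms(1) unfolding TS_adj_def by blast
  moreover have "card A = k" using assms(1) unfolding TS_adj_def cliques_def by blast
  moreover have "card A = card (A \<inter> B) + card (A - B)"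
    using assms calculation by (intro card_Int_Diff) (simp add: card_ge_0_finite)
  ultimately show ?thesis by simp
qed

lemma card_Int_pairs_not_all_one:
  assumes "u \<noteq> v" "v \<noteq> w" "u \<noteq> w"
  shows "\<not> (card ({u, v} \<inter> Z) = 1 \<and> card ({v, w} \<inter> Z) = 1 \<and> card ({u, w} \<inter> Z) = 1)"
  using assms by (cases "u \<in> Z"; cases "v \<in> Z"; cases "w \<in> Z") (auto simp: Int_insert_left)

lemma TS2_not_triangles_extend:
  assumes "simple_graph V E" and PQ: "TS_adj V E 2 P Q"
  shows "\<not> triangles_extend (TS_vert V E 2) (TS_adj V E 2)"
proof
  assume extend: "triangles_extend (TS_vert V E 2) (TS_adj V E 2)"
  have P: "P \<in> cliques V E 2" and Q: "Q \<in> cliques V E 2"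
    using PQ unfolding TS_adj_def by blast+
  obtain u w where uw: "P - Q = {u}" "Q - P = {w}" "E u w"
    using PQ unfolding TS_adj_def by blast
  have "E w u" using uw(3) assms(1) unfolding simple_graph_def by blast
  have "card (P \<inter> Q) = 1" using TS_adj_card_Int[OF PQ] by simp
  then obtain v where "P \<inter> Q = {v}" by (rule card_1_singletonE)
  then have P_eq: "P = {u, v}" and Q_eq: "Q = {v, w}"
    and distinct: "u \<noteq> v" "v \<noteq> w" "u \<noteq> w"
    using uw by blast+
  have "E v w" "E v u"
    using P Q distinct unfolding P_eq Q_eq cliques_def by auto
  define R where "R = {u, w}"
  have R: "R \<in> cliques V E 2"
    using P Q \<open>E u w\<close> \<open>E w u\<close> distinct unfolding R_def P_eq Q_eq cliques_def by auto
  have PR: "TS_adj V E 2 P R"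
    unfolding TS_adj_def using P R \<open>E v w\<close> distinct unfolding P_eq R_def by blast
  have QR: "TS_adj V E 2 Q R"
    unfolding TS_adj_def using Q R \<open>E v u\<close> distinct unfolding Q_eq R_def by blast
  obtain Z where "TS_adj V E 2 P Z" "TS_adj V E 2 Q Z" "TS_adj V E 2 R Z"
    using extend P Q R PQ PR QR unfolding triangles_extend_def TS_vert_def by blast
  then have "card ({u, v} \<inter> Z) = 1" "card ({v, w} \<inter> Z) = 1" "card ({u, w} \<inter> Z) = 1"
    using TS_adj_card_Int unfolding P_eq Q_eq R_def by fastforce+
  then show False using card_Int_pairs_not_all_one[OF distinct] by blast
qed

theorem theorem3p9:
  fixes n r :: nat and V :: "'a set" and E :: "'a \<Rightarrow> 'a \<Rightarrow> bool"
  assumes "3 \<le> r" and "r + 3 \<le> n"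
    and "simple_graph V E"
  shows "\<not> graph_iso (TS_vert V E 2) (TS_adj V E 2) (johnson_vert n r) (johnson_adj n r)"
proof
  assume iso: "graph_iso (TS_vert V E 2) (TS_adj V E 2) (johnson_vert n r) (johnson_adj n r)"
  have "johnson_adj n r {1..r} {2..r+1}"
    using assms(2) by (intro johnson_adj_interval_shift) simp
  then obtain P Q where "TS_adj V E 2 P Q"
    using graph_iso_reflects_edge[OF iso] unfolding johnson_adj_def by blast
  moreover have "triangles_extend (TS_vert V E 2) (TS_adj V E 2)"
    using graph_iso_reflects_triangles_extend[OF iso johnson_triangles_extend[OF assms(1,2)]] .
  ultimately show False using TS2_not_triangles_extend[OF assms(3)] by blast
qed

end
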